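(* For a graph $G$, let $\widehat G$ denote its full suspension (cone), obtained by adding a new vertex adjacent to every vertex of $G$. Then: (a) for $n\ge 3$, $\widehat{C_n}$ is pseudo-Gorenstein$^{*}$ if and only if $n\equiv 0\pmod{12}$; (b) for $n\ge 1$, $\widehat{P_n}$ is pseudo-Gorenstein$^{*}$ if and only if $n\equiv 1,10\pmod{12}$.
   Context: $C_n$ is the cycle and $P_n$ the path on $n$ vertices. For a finite simple graph $G$ on vertex set $[N]$, let $S=K[x_1,\dots,x_N]$ ($K$ a field) and $I(G)$ the edge ideal generated by $x_ix_j$, $\{i,j\}\in E(G)$. Let $\alpha(G)$ be the independence number (equal to $\dim S/I(G)$). Write the Hilbert series of $S/I(G)$ uniquely as $(h_0+\dots+h_st^s)/(1-t)^{\alpha(G)}$ with $h_s\ne 0$, and $\mathfrak a(G)=s-\alpha(G)$. $G$ is pseudo-Gorenstein$^{*}$ if $h_s=1$ and $\mathfrak a(G)=0$. *)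

theory Defs
  imports "HOL-Computational_Algebra.Computational_Algebra"
begin

text \<open>A finite simple graph is given by a vertex set V and a set E of 2-element
  subsets of V (edges). Monomials in the variables x_v (v in V) are exponent
  functions m with support in V.\<close>

definition cycle_edges :: "nat \<Rightarrow> nat set set" where
  "cycle_edges n = {{i, (i + 1) mod n} | i. i < n}"

definition path_edges :: "nat \<Rightarrow> nat set set" where
  "path_edges n = {{i, Suc i} | i. Suc i < n}"

definition cone_edges :: "'a set \<Rightarrow> 'a set set \<Rightarrow> 'a \<Rightarrow> 'a set set" where
  "cone_edges V E v = E \<union> {{u, v} | u. u \<in> V}"

definition independent :: "'a set \<Rightarrow> 'a set set \<Rightarrow> 'a set \<Rightarrow> bool" where
  "independent V E F \<longleftrightarrow> F \<subseteq> V \<and> (\<forall>e\<in>E. \<not> e \<subseteq> F)"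

definition indep_number :: "'a set \<Rightarrow> 'a set set \<Rightarrow> nat" where
  "indep_number V E = Max (card ` {F. independent V E F})"

definition monomials_deg :: "'a set \<Rightarrow> nat \<Rightarrow> ('a \<Rightarrow> nat) set" where
  "monomials_deg V k = {m. (\<forall>x. x \<notin> V \<longrightarrow> m x = 0) \<and> (\<Sum>x\<in>V. m x) = k}"

text \<open>A monomial lies in the monomial ideal I(G) iff it is divisible by some
  edge monomial x_i x_j.\<close>
definition in_edge_ideal :: "'a set set \<Rightarrow> ('a \<Rightarrow> nat) \<Rightarrow> bool" where
  "in_edge_ideal E m \<longleftrightarrow> (\<exists>e\<in>E. \<forall>x\<in>e. 1 \<le> m x)"

text \<open>Hilbert function of S/I(G): the monomials not in I(G) form a K-basis of
  S/I(G) (standard monomials), independent of the field K.\<close>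
definition hilbert_fun :: "'a set \<Rightarrow> 'a set set \<Rightarrow> nat \<Rightarrow> nat" where
  "hilbert_fun V E k = card {m \<in> monomials_deg V k. \<not> in_edge_ideal E m}"

definition hilbert_series :: "'a set \<Rightarrow> 'a set set \<Rightarrow> int fps" where
  "hilbert_series V E = Abs_fps (\<lambda>k. int (hilbert_fun V E k))"

text \<open>pseudo-Gorenstein*: writing HS = h(t)/(1-t)^alpha with h polynomial
  (h is unique), h_s = 1 for s = deg h and a(G) = s - alpha = 0.\<close>
definition pseudo_gorenstein_star :: "'a set \<Rightarrow> 'a set set \<Rightarrow> bool" where
  "pseudo_gorenstein_star V E \<longleftrightarrow>
     (\<exists>h :: int poly. fps_of_poly h = hilbert_series V E * (1 - fps_X) ^ indep_number V E
        \<and> h \<noteq> 0 \<and> lead_coeff h = 1 \<and> int (degree h) - int (indep_number V E) = 0)"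

end

theory Submission
  imports Defs
begin

text \<open>The standard monomials of S/I(G) are sorted by their support, which is an independent set F;
  those with support F contribute t^|F| / (1 - t)^|F| to the Hilbert series. Hence the numerator
  over (1 - t)^alpha is h(t) = sum_F t^|F| (1 - t)^(alpha - |F|), of degree at most alpha, with
  h_alpha = (-1)^alpha I(G; -1) where I(G; -1) = sum_F (-1)^|F|. So G is pseudo-Gorenstein* iff
  (-1)^alpha I(G; -1) = 1. Coning adds only the independent set consisting of the apex, so alpha is
  unchanged and I drops by 1. For paths I(P_n; -1) satisfies I_(n+2) = I_(n+1) - I_n and is thus
  6-periodic, and I(C_n; -1) = I(P_(n-1); -1) - I(P_(n-3); -1). Together with
  alpha(P_n) = ceil(n/2) and alpha(C_n) = floor(n/2), the criterion becomes a 12-periodic condition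
  on n, which is checked on the residues.\<close>

section \<open>Standard monomials and the h-polynomial\<close>

abbreviation indep_sets :: "'a set \<Rightarrow> 'a set set \<Rightarrow> 'a set set" where
  "indep_sets V E \<equiv> {F. independent V E F}"

definition alt_card_sum :: "'a set set \<Rightarrow> int" where
  "alt_card_sum X = (\<Sum>F\<in>X. (-1) ^ card F)"

lemma alt_card_sum_insert:
  assumes "finite X" "F \<notin> X"
  shows "alt_card_sum (insert F X) = (-1) ^ card F + alt_card_sum X"
  using assms by (simp add: alt_card_sum_def)

lemma alt_card_sum_Un_disjoint:
  assumes "finite X" "finite Y" "X \<inter> Y = {}"
  shows "alt_card_sum (X \<union> Y) = alt_card_sum X + alt_card_sum Y"
  using assms by (simp add: alt_card_sum_def sum.union_disjoint)

lemma alt_card_sum_insert_image: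
  assumes "\<forall>F\<in>X. finite F \<and> x \<notin> F"
  shows "alt_card_sum (insert x ` X) = - alt_card_sum X"
proof -
  have "inj_on (insert x) X"
    using assms by (auto simp: inj_on_def)
  then have "alt_card_sum (insert x ` X) = (\<Sum>F\<in>X. (-1) ^ card (insert x F))"
    unfolding alt_card_sum_def by (simp add: sum.reindex)
  also have "\<dots> = (\<Sum>F\<in>X. - ((-1) ^ card F))"
    using assms by (intro sum.cong) auto
  finally show ?thesis
    by (simp add: alt_card_sum_def sum_negf)
qed

definition supp_monomials :: "'a set \<Rightarrow> nat \<Rightarrow> ('a \<Rightarrow> nat) set" where
  "supp_monomials F k = {m. (\<forall>x. x \<notin> F \<longrightarrow> m x = 0) \<and> (\<forall>x\<in>F. 1 \<le> m x) \<and> sum m F = k}"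

lemma finite_supp_monomials:
  assumes "finite F"
  shows "finite (supp_monomials F k)"
proof -
  have "supp_monomials F k \<subseteq> {m. \<forall>x. (x \<in> F \<longrightarrow> m x \<in> {..k}) \<and> (x \<notin> F \<longrightarrow> m x = 0)}"
    using assms by (auto simp: supp_monomials_def intro: member_le_sum)
  moreover have "finite {m. \<forall>x. (x \<in> F \<longrightarrow> m x \<in> {..k}) \<and> (x \<notin> F \<longrightarrow> m x = (0::nat))}"
    using assms by (intro finite_set_of_finite_funs) auto
  ultimately show ?thesis
    by (rule finite_subset)
qed

lemma supp_monomials_empty: "supp_monomials {} k = (if k = 0 then {\<lambda>_. 0} else {})"
  by (auto simp: supp_monomials_def)

lemma supp_monomials_insert_0:
  assumes "finite F" "a \<notin> F"
  shows "supp_monomials (insert a F) 0 = {}"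
  using assms by (auto simp: supp_monomials_def)

text \<open>A monomial with support insert a F has x_a-exponent either at least 2, so dividing by x_a keeps
  the support, or exactly 1, so dividing by x_a removes a from the support.\<close>
lemma card_supp_monomials_insert_Suc:
  assumes fin: "finite F" and a: "a \<notin> F"
  shows "card (supp_monomials (insert a F) (Suc k))
       = card (supp_monomials (insert a F) k) + card (supp_monomials F k)"
proof -
  let ?M = "supp_monomials (insert a F) (Suc k)"
  define A where "A = {m\<in>?M. 2 \<le> m a}"
  define B where "B = {m\<in>?M. m a = 1}"
  have sum_upd: "(\<Sum>x\<in>F. if x = a then c else m x) = sum m F" for m :: "'a \<Rightarrow> nat" and c
    using a by (intro sum.cong) auto
  have "?M = A \<union> B" "A \<inter> B = {}"
    by (auto simp: A_def B_def supp_monomials_def)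
  moreover have "finite A" "finite B"
    using finite_supp_monomials[of "insert a F" "Suc k"] fin by (auto simp: A_def B_def)
  moreover have "bij_betw (\<lambda>m. m(a := m a - 1)) A (supp_monomials (insert a F) k)"
    by (rule bij_betwI[where g = "\<lambda>m. m(a := m a + 1)"])
      (use fin a in \<open>auto simp: A_def supp_monomials_def sum_upd\<close>)
  moreover have "bij_betw (\<lambda>m. m(a := 0)) B (supp_monomials F k)"
    by (rule bij_betwI[where g = "\<lambda>m. m(a := 1)"])
      (use fin a in \<open>auto simp: B_def supp_monomials_def sum_upd\<close>)
  ultimately show ?thesis
    by (simp add: card_Un_disjoint bij_betw_same_card)
qed

definition supp_monomial_series :: "'a set \<Rightarrow> int fps" where
  "supp_monomial_series F = Abs_fps (\<lambda>k. int (card (supp_monomials F k)))"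

lemma supp_monomial_series_mult_power:
  assumes "finite F"
  shows "supp_monomial_series F * (1 - fps_X) ^ card F = fps_X ^ card F"
  using assms
proof (induction F rule: finite_induct)
  case empty
  show ?case
    by (auto simp: supp_monomial_series_def supp_monomials_empty fps_eq_iff)
next
  case (insert a F)
  let ?S = supp_monomial_series
  have "?S (insert a F) = fps_X * ?S F + fps_X * ?S (insert a F)"
  proof (rule fps_ext)
    show "?S (insert a F) $ k = (fps_X * ?S F + fps_X * ?S (insert a F)) $ k" for k
      using insert.hyps
      by (cases k) (auto simp: supp_monomial_series_def supp_monomials_insert_0
          card_supp_monomials_insert_Suc)
  qed
  then have "?S (insert a F) * (1 - fps_X) = fps_X * ?S F"
    by (simp add: algebra_simps)
  then have "?S (insert a F) * (1 - fps_X) ^ card (insert a F)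
           = fps_X * (?S F * (1 - fps_X) ^ card F)"
    using insert.hyps by (simp add: mult.assoc[symmetric] mult.commute[of fps_X])
  also have "\<dots> = fps_X ^ card (insert a F)"
    using insert by simp
  finally show ?case .
qed

lemma finite_indep_sets: "finite V \<Longrightarrow> finite (indep_sets V E)"
  by (rule finite_subset[of _ "Pow V"]) (auto simp: independent_def)

lemma finite_indep_set: "finite V \<Longrightarrow> independent V E F \<Longrightarrow> finite F"
  by (auto simp: independent_def intro: finite_subset)

lemma supp_monomials_support: "m \<in> supp_monomials F k \<Longrightarrow> F = {x. 1 \<le> m x}"
  by (force simp: supp_monomials_def)

lemma standard_monomials_eq_UN_indep_sets:
  assumes fin: "finite V"
  shows "{m \<in> monomials_deg V k. \<not> in_edge_ideal E m} = (\<Union>F\<in>indep_sets V E. supp_monomials F k)"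
proof (intro equalityI subsetI)
  fix m assume m: "m \<in> {m \<in> monomials_deg V k. \<not> in_edge_ideal E m}"
  define F where "F = {x\<in>V. 1 \<le> m x}"
  have "sum m F = sum m V"
    using fin by (intro sum.mono_neutral_left) (auto simp: F_def)
  then have "m \<in> supp_monomials F k"
    using m by (auto simp: supp_monomials_def monomials_deg_def F_def)
  moreover have "independent V E F"
    using m by (auto simp: independent_def F_def in_edge_ideal_def)
  ultimately show "m \<in> (\<Union>F\<in>indep_sets V E. supp_monomials F k)"
    by blast
next
  fix m assume "m \<in> (\<Union>F\<in>indep_sets V E. supp_monomials F k)"
  then obtain F where F: "independent V E F" and m: "m \<in> supp_monomials F k"
    by blast
  have "sum m F = sum m V"
    using fin F m by (intro sum.mono_neutral_left) (auto simp: supp_monomials_def independent_def)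
  then have "m \<in> monomials_deg V k"
    using m F by (auto simp: monomials_deg_def supp_monomials_def independent_def)
  moreover have "\<not> in_edge_ideal E m"
    using F m by (fastforce simp: in_edge_ideal_def independent_def supp_monomials_def)
  ultimately show "m \<in> {m \<in> monomials_deg V k. \<not> in_edge_ideal E m}"
    by blast
qed

lemma hilbert_fun_eq_sum_indep_sets:
  assumes fin: "finite V"
  shows "hilbert_fun V E k = (\<Sum>F\<in>indep_sets V E. card (supp_monomials F k))"
  unfolding hilbert_fun_def standard_monomials_eq_UN_indep_sets[OF fin]
proof (rule card_UN_disjoint)
  show "finite (indep_sets V E)"
    using fin by (rule finite_indep_sets)
  show "\<forall>F\<in>indep_sets V E. finite (supp_monomials F k)"
    using fin by (auto intro: finite_supp_monomials finite_indep_set)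
  show "\<forall>F\<in>indep_sets V E. \<forall>G\<in>indep_sets V E.
      F \<noteq> G \<longrightarrow> supp_monomials F k \<inter> supp_monomials G k = {}"
    using supp_monomials_support by blast
qed

lemma hilbert_series_eq_sum_indep_sets:
  assumes "finite V"
  shows "hilbert_series V E = (\<Sum>F\<in>indep_sets V E. supp_monomial_series F)"
  by (rule fps_ext)
    (simp add: hilbert_series_def hilbert_fun_eq_sum_indep_sets[OF assms] fps_sum_nth
      supp_monomial_series_def)

lemma card_le_indep_number:
  assumes "finite V" "independent V E F"
  shows "card F \<le> indep_number V E"
  unfolding indep_number_def using assms finite_indep_sets by (intro Max_ge) auto

lemma indep_number_attained:
  assumes "finite V" "{} \<notin> E"
  obtains F where "independent V E F" "card F = indep_number V E"
proof -
  have "independent V E {}"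
    using assms by (auto simp: independent_def)
  then have "indep_number V E \<in> card ` indep_sets V E"
    unfolding indep_number_def using assms finite_indep_sets by (intro Max_in) auto
  then show ?thesis
    using that by (auto simp: image_iff)
qed

lemma indep_number_eqI:
  assumes "finite V" and "\<And>F. independent V E F \<Longrightarrow> card F \<le> a"
    and "independent V E F" "card F = a"
  shows "indep_number V E = a"
  unfolding indep_number_def using assms finite_indep_sets by (intro Max_eqI) auto

definition h_polynomial :: "'a set \<Rightarrow> 'a set set \<Rightarrow> int poly" where
  "h_polynomial V E =
     (\<Sum>F\<in>indep_sets V E. monom 1 (card F) * [:1, -1:] ^ (indep_number V E - card F))"

lemma fps_of_poly_one_minus_X: "fps_of_poly [:1, -1:] = (1 - fps_X :: 'a :: comm_ring_1 fps)"
proof -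
  have "[:1, -1:] = 1 - [:0, 1 :: 'a:]"
    by (simp add: one_pCons)
  then show ?thesis
    by (simp add: fps_of_poly_diff)
qed

lemma fps_of_h_polynomial:
  assumes fin: "finite V"
  shows "fps_of_poly (h_polynomial V E) = hilbert_series V E * (1 - fps_X) ^ indep_number V E"
proof -
  let ?a = "indep_number V E"
  have "hilbert_series V E * (1 - fps_X) ^ ?a
      = (\<Sum>F\<in>indep_sets V E. supp_monomial_series F * (1 - fps_X) ^ card F * (1 - fps_X) ^ (?a - card F))"
    unfolding hilbert_series_eq_sum_indep_sets[OF fin] sum_distrib_right
    by (intro sum.cong) (simp_all add: card_le_indep_number[OF fin] mult.assoc power_add[symmetric])
  also have "\<dots> = (\<Sum>F\<in>indep_sets V E. fps_X ^ card F * (1 - fps_X) ^ (?a - card F))"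
    by (intro sum.cong) (simp_all add: supp_monomial_series_mult_power finite_indep_set[OF fin])
  also have "\<dots> = fps_of_poly (h_polynomial V E)"
    by (simp add: h_polynomial_def fps_of_poly_sum fps_of_poly_mult fps_of_poly_power
        fps_of_poly_monom' fps_of_poly_one_minus_X)
  finally show ?thesis ..
qed

lemma degree_h_polynomial_le:
  assumes fin: "finite V"
  shows "degree (h_polynomial V E) \<le> indep_number V E"
  unfolding h_polynomial_def
proof (rule degree_sum_le[OF finite_indep_sets[OF fin]])
  fix F assume "F \<in> indep_sets V E"
  then have "card F + (indep_number V E - card F) = indep_number V E"
    using card_le_indep_number[OF fin] by simp
  then show "degree (monom (1::int) (card F) * [:1, -1:] ^ (indep_number V E - card F))
      \<le> indep_number V E"
    using degree_mult_le[of "monom (1::int) (card F)" "[:1, -1:] ^ (indep_number V E - card F)"]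
    by (simp add: degree_monom_eq)
qed

lemma coeff_h_polynomial_indep_number:
  assumes fin: "finite V"
  shows "coeff (h_polynomial V E) (indep_number V E)
       = (-1) ^ indep_number V E * alt_card_sum (indep_sets V E)"
  unfolding h_polynomial_def coeff_sum alt_card_sum_def sum_distrib_left
  by (intro sum.cong) (simp_all add: coeff_monom_mult card_le_indep_number[OF fin] not_less
        neg_one_power_add_eq_neg_one_power_diff[symmetric] power_add)

lemma pseudo_gorenstein_star_iff:
  assumes fin: "finite V"
  shows "pseudo_gorenstein_star V E
     \<longleftrightarrow> (-1) ^ indep_number V E * alt_card_sum (indep_sets V E) = 1"
    (is "_ \<longleftrightarrow> ?c = 1")
proof
  assume "pseudo_gorenstein_star V E"
  then obtain h where h: "fps_of_poly h = hilbert_series V E * (1 - fps_X) ^ indep_number V E"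
    and "lead_coeff h = 1" "degree h = indep_number V E"
    unfolding pseudo_gorenstein_star_def by auto
  moreover have "h = h_polynomial V E"
    using h fps_of_h_polynomial[OF fin] fps_of_poly_eq_iff by metis
  ultimately show "?c = 1"
    using coeff_h_polynomial_indep_number[OF fin] by simp
next
  assume "?c = 1"
  then have lead: "coeff (h_polynomial V E) (indep_number V E) = 1"
    using coeff_h_polynomial_indep_number[OF fin] by simp
  then have "indep_number V E \<le> degree (h_polynomial V E)"
    by (intro le_degree) simp
  then have "degree (h_polynomial V E) = indep_number V E"
    using degree_h_polynomial_le[OF fin] by (rule antisym[rotated])
  then show "pseudo_gorenstein_star V E"
    unfolding pseudo_gorenstein_star_def using fps_of_h_polynomial[OF fin] lead
    by (intro exI[of _ "h_polynomial V E"]) auto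
qed

section \<open>Cones\<close>

lemma indep_sets_cone:
  assumes v: "v \<notin> V" and E: "\<forall>e\<in>E. e \<subseteq> V \<and> e \<noteq> {}"
  shows "indep_sets (insert v V) (cone_edges V E v) = insert {v} (indep_sets V E)"
proof -
  have "independent (insert v V) (cone_edges V E v) F \<longleftrightarrow> F = {v} \<or> independent V E F" for F
  proof
    assume indep: "independent (insert v V) (cone_edges V E v) F"
    show "F = {v} \<or> independent V E F"
    proof (cases "v \<in> F")
      case True
      have "u \<notin> F" if "u \<in> V" for u
      proof -
        have "{u, v} \<in> cone_edges V E v"
          using that by (auto simp: cone_edges_def)
        then show ?thesis
          using indep True by (auto simp: independent_def)
      qed
      then have "F = {v}"
        using indep True by (auto simp: independent_def)
      then show ?thesis ..
    next
      case False
      then show ?thesis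
        using indep by (auto simp: independent_def cone_edges_def)
    qed
  next
    assume "F = {v} \<or> independent V E F"
    then show "independent (insert v V) (cone_edges V E v) F"
      using v E by (auto simp: independent_def cone_edges_def)
  qed
  then show ?thesis
    by blast
qed

lemma indep_number_cone:
  assumes fin: "finite V" and "V \<noteq> {}" and v: "v \<notin> V"
    and E: "\<forall>e\<in>E. e \<subseteq> V \<and> card e = 2"
  shows "indep_number (insert v V) (cone_edges V E v) = indep_number V E"
proof -
  have indep: "indep_sets (insert v V) (cone_edges V E v) = insert {v} (indep_sets V E)"
    using E by (intro indep_sets_cone[OF v]) fastforce
  obtain u where "u \<in> V"
    using \<open>V \<noteq> {}\<close> by blast
  have "\<not> e \<subseteq> {u}" if "e \<in> E" for e
    using E that card_mono[of "{u}" e] by fastforce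
  then have "independent V E {u}"
    using \<open>u \<in> V\<close> by (simp add: independent_def)
  then have apex_le: "card {v} \<le> indep_number V E"
    using card_le_indep_number[OF fin] by fastforce
  have "{} \<notin> E"
    using E by fastforce
  then obtain F where F: "independent V E F" "card F = indep_number V E"
    using indep_number_attained[OF fin] by blast
  show ?thesis
  proof (rule indep_number_eqI)
    show "card G \<le> indep_number V E" if "independent (insert v V) (cone_edges V E v) G" for G
    proof -
      have "G \<in> insert {v} (indep_sets V E)"
        using that unfolding indep[symmetric] by simp
      then show ?thesis
        using apex_le card_le_indep_number[OF fin] by auto
    qed
    have "F \<in> indep_sets (insert v V) (cone_edges V E v)"
      unfolding indep using F(1) by simp
    then show "independent (insert v V) (cone_edges V E v) F"
      by simp
  qed (use fin F in simp_all)
qed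

lemma alt_card_sum_cone:
  assumes fin: "finite V" and v: "v \<notin> V" and E: "\<forall>e\<in>E. e \<subseteq> V \<and> e \<noteq> {}"
  shows "alt_card_sum (indep_sets (insert v V) (cone_edges V E v)) = alt_card_sum (indep_sets V E) - 1"
proof -
  have "{v} \<notin> indep_sets V E"
    using v by (simp add: independent_def)
  then show ?thesis
    unfolding indep_sets_cone[OF v E] by (simp add: alt_card_sum_insert finite_indep_sets[OF fin])
qed

lemma pseudo_gorenstein_star_cone_iff:
  assumes fin: "finite V" and "V \<noteq> {}" and v: "v \<notin> V"
    and E: "\<forall>e\<in>E. e \<subseteq> V \<and> card e = 2"
  shows "pseudo_gorenstein_star (insert v V) (cone_edges V E v)
     \<longleftrightarrow> (-1) ^ indep_number V E * (alt_card_sum (indep_sets V E) - 1) = 1"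
proof -
  have "\<forall>e\<in>E. e \<subseteq> V \<and> e \<noteq> {}"
    using E by fastforce
  then show ?thesis
    using assms by (simp add: pseudo_gorenstein_star_iff indep_number_cone alt_card_sum_cone)
qed

section \<open>Paths and cycles\<close>

definition nonadjacent_subsets :: "nat \<Rightarrow> nat \<Rightarrow> nat set set" where
  "nonadjacent_subsets a k = {F. F \<subseteq> {a..<a + k} \<and> (\<forall>i\<in>F. Suc i \<notin> F)}"

lemma finite_nonadjacent_subsets: "finite (nonadjacent_subsets a k)"
  by (rule finite_subset[of _ "Pow {a..<a + k}"]) (auto simp: nonadjacent_subsets_def)

lemma finite_nonadjacent_subset: "F \<in> nonadjacent_subsets a k \<Longrightarrow> finite F"
  by (auto simp: nonadjacent_subsets_def intro: finite_subset)

lemma nonadjacent_subsets_0: "nonadjacent_subsets a 0 = {{}}"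
  by (auto simp: nonadjacent_subsets_def)

lemma nonadjacent_subsets_1: "nonadjacent_subsets a (Suc 0) = {{}, {a}}"
  by (auto simp: nonadjacent_subsets_def)

lemma nonadjacent_subsets_Suc_Suc:
  "nonadjacent_subsets a (Suc (Suc k))
     = nonadjacent_subsets a (Suc k) \<union> insert (Suc (a + k)) ` nonadjacent_subsets a k"
proof (intro equalityI subsetI)
  fix F assume F: "F \<in> nonadjacent_subsets a (Suc (Suc k))"
  show "F \<in> nonadjacent_subsets a (Suc k) \<union> insert (Suc (a + k)) ` nonadjacent_subsets a k"
  proof (cases "Suc (a + k) \<in> F")
    case False
    then have "F \<in> nonadjacent_subsets a (Suc k)"
      using F by (auto simp: nonadjacent_subsets_def less_Suc_eq)
    then show ?thesis ..
  next
    case True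
    then have "a + k \<notin> F"
      using F by (auto simp: nonadjacent_subsets_def)
    then have "F - {Suc (a + k)} \<in> nonadjacent_subsets a k"
      using F by (auto simp: nonadjacent_subsets_def less_Suc_eq)
    moreover have "F = insert (Suc (a + k)) (F - {Suc (a + k)})"
      using True by blast
    ultimately show ?thesis
      by blast
  qed
qed (auto simp: nonadjacent_subsets_def)

lemma nonadjacent_subsets_avoiding_start:
  "{F \<in> nonadjacent_subsets a (Suc k). a \<notin> F} = nonadjacent_subsets (Suc a) k"
  by (auto simp: nonadjacent_subsets_def Suc_le_eq le_less)

text \<open>F and its shift Suc ` F are disjoint subsets of an interval with k + 1 elements.\<close>
lemma card_nonadjacent_subset_le:
  assumes "F \<in> nonadjacent_subsets a k"
  shows "card F \<le> (k + 1) div 2"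
proof -
  have F: "F \<subseteq> {a..<a + k}" "F \<inter> Suc ` F = {}"
    using assms by (auto simp: nonadjacent_subsets_def)
  then have "F \<union> Suc ` F \<subseteq> {a..<a + k + 1}"
    by auto
  then have "card (F \<union> Suc ` F) \<le> k + 1"
    using card_mono[of "{a..<a + k + 1}"] by fastforce
  moreover have "card (F \<union> Suc ` F) = 2 * card F"
    using F finite_subset[OF F(1)] by (simp add: card_Un_disjoint card_image)
  ultimately show ?thesis
    by linarith
qed

lemma nonadjacent_subset_card_eq:
  obtains F where "F \<in> nonadjacent_subsets a k" "card F = (k + 1) div 2"
proof -
  have "\<exists>F \<in> nonadjacent_subsets a k. card F = (k + 1) div 2"
  proof (induction k rule: nat_induct2)
    case (step j)
    then obtain G where G: "G \<in> nonadjacent_subsets a j" "card G = (j + 1) div 2"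
      by blast
    then have "Suc (a + j) \<notin> G"
      by (auto simp: nonadjacent_subsets_def)
    then have "card (insert (Suc (a + j)) G) = (j + 2 + 1) div 2"
      using G finite_nonadjacent_subset by simp
    moreover have "insert (Suc (a + j)) G \<in> nonadjacent_subsets a (j + 2)"
      using nonadjacent_subsets_Suc_Suc[of a j] G by simp
    ultimately show ?case
      by blast
  qed (auto simp: nonadjacent_subsets_0 nonadjacent_subsets_1)
  then show ?thesis
    using that by blast
qed

text \<open>path_alt k is the independence polynomial of the path on k vertices evaluated at -1.\<close>
fun path_alt :: "nat \<Rightarrow> int" where
  "path_alt 0 = 1"
| "path_alt (Suc 0) = 0"
| "path_alt (Suc (Suc k)) = path_alt (Suc k) - path_alt k"

lemma path_alt_numeral [simp]:
  "path_alt (numeral k) = path_alt (pred_numeral k) - path_alt (pred_numeral k - 1)"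
  by (cases "pred_numeral k") (simp_all add: numeral_eq_Suc)

lemma path_alt_add_6: "path_alt (k + 6) = path_alt k"
  by (simp add: numeral_eq_Suc)

lemma alt_card_sum_nonadjacent_subsets: "alt_card_sum (nonadjacent_subsets a k) = path_alt k"
proof (induction k rule: path_alt.induct)
  case (3 k)
  have "nonadjacent_subsets a (Suc k) \<inter> insert (Suc (a + k)) ` nonadjacent_subsets a k = {}"
    by (auto simp: nonadjacent_subsets_def)
  then have "alt_card_sum (nonadjacent_subsets a (Suc (Suc k)))
      = alt_card_sum (nonadjacent_subsets a (Suc k))
        + alt_card_sum (insert (Suc (a + k)) ` nonadjacent_subsets a k)"
    unfolding nonadjacent_subsets_Suc_Suc
    by (simp add: alt_card_sum_Un_disjoint finite_nonadjacent_subsets)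
  also have "alt_card_sum (insert (Suc (a + k)) ` nonadjacent_subsets a k)
      = - alt_card_sum (nonadjacent_subsets a k)"
    by (rule alt_card_sum_insert_image) (auto simp: nonadjacent_subsets_def finite_nonadjacent_subset)
  finally show ?case
    using 3 by simp
qed (simp_all add: alt_card_sum_def nonadjacent_subsets_0 nonadjacent_subsets_1)

lemma indep_sets_path: "indep_sets {0..<n} (path_edges n) = nonadjacent_subsets 0 n"
proof -
  have "independent {0..<n} (path_edges n) F \<longleftrightarrow> F \<in> nonadjacent_subsets 0 n" for F
  proof
    assume "independent {0..<n} (path_edges n) F"
    then show "F \<in> nonadjacent_subsets 0 n"
      by (auto simp: independent_def path_edges_def nonadjacent_subsets_def subset_iff)
  next
    assume "F \<in> nonadjacent_subsets 0 n"
    then show "independent {0..<n} (path_edges n) F"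
      by (auto simp: independent_def path_edges_def nonadjacent_subsets_def)
  qed
  then show ?thesis
    by auto
qed

lemma cycle_edges_eq_path_edges:
  assumes "2 \<le> n"
  shows "cycle_edges n = insert {n - 1, 0} (path_edges n)"
proof -
  have ivl: "{..<n} = insert (n - 1) {..<n - 1}"
    using assms by auto
  have "cycle_edges n = (\<lambda>i. {i, (i + 1) mod n}) ` {..<n}"
    unfolding cycle_edges_def by blast
  also have "\<dots> = insert {n - 1, 0} ((\<lambda>i. {i, (i + 1) mod n}) ` {..<n - 1})"
    unfolding ivl using assms by simp
  also have "(\<lambda>i. {i, (i + 1) mod n}) ` {..<n - 1} = path_edges n"
    unfolding path_edges_def by force
  finally show ?thesis .
qed

lemma independent_insert_edge:
  "independent V (insert e E) F \<longleftrightarrow> independent V E F \<and> \<not> e \<subseteq> F"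
  by (auto simp: independent_def)

text \<open>An independent set of the cycle containing n - 1 avoids 0 and n - 2.\<close>
lemma indep_sets_cycle:
  assumes "3 \<le> n"
  shows "indep_sets {0..<n} (cycle_edges n)
       = nonadjacent_subsets 0 (n - 1) \<union> insert (n - 1) ` nonadjacent_subsets 1 (n - 3)"
proof -
  obtain k where "n = 3 + k"
    using le_Suc_ex[OF assms] by blast
  then have n: "n = Suc (Suc (Suc k))"
    by simp
  let ?e = "{Suc (Suc k), 0}"
  have "indep_sets {0..<n} (cycle_edges n) = {F \<in> nonadjacent_subsets 0 n. \<not> ?e \<subseteq> F}"
    using indep_sets_path[of n] n by (auto simp: cycle_edges_eq_path_edges independent_insert_edge)
  also have "\<dots> = {F \<in> nonadjacent_subsets 0 (Suc (Suc k)). \<not> ?e \<subseteq> F}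
      \<union> {F \<in> insert (Suc (Suc k)) ` nonadjacent_subsets 0 (Suc k). \<not> ?e \<subseteq> F}"
    unfolding n nonadjacent_subsets_Suc_Suc[of 0 "Suc k"] by auto
  also have "{F \<in> nonadjacent_subsets 0 (Suc (Suc k)). \<not> ?e \<subseteq> F} = nonadjacent_subsets 0 (Suc (Suc k))"
    by (auto simp: nonadjacent_subsets_def)
  also have "{F \<in> insert (Suc (Suc k)) ` nonadjacent_subsets 0 (Suc k). \<not> ?e \<subseteq> F}
      = insert (Suc (Suc k)) ` {G \<in> nonadjacent_subsets 0 (Suc k). 0 \<notin> G}"
    by auto
  finally show ?thesis
    unfolding nonadjacent_subsets_avoiding_start n by simp
qed

lemma path_edges_simple: "\<forall>e\<in>path_edges n. e \<subseteq> {0..<n} \<and> card e = 2"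
  by (auto simp: path_edges_def)

lemma cycle_edges_simple:
  assumes "2 \<le> n"
  shows "\<forall>e\<in>cycle_edges n. e \<subseteq> {0..<n} \<and> card e = 2"
  using assms path_edges_simple[of n] by (simp add: cycle_edges_eq_path_edges)

lemma indep_number_path: "indep_number {0..<n} (path_edges n) = (n + 1) div 2"
proof -
  obtain F where "F \<in> nonadjacent_subsets 0 n" "card F = (n + 1) div 2"
    by (rule nonadjacent_subset_card_eq)
  then show ?thesis
    using indep_sets_path[of n] card_nonadjacent_subset_le
    by (intro indep_number_eqI[of _ _ _ F]) auto
qed

lemma alt_card_sum_cycle:
  assumes "3 \<le> n"
  shows "alt_card_sum (indep_sets {0..<n} (cycle_edges n)) = path_alt (n - 1) - path_alt (n - 3)"
proof -
  have "nonadjacent_subsets 0 (n - 1) \<inter> insert (n - 1) ` nonadjacent_subsets 1 (n - 3) = {}"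
    using assms by (auto simp: nonadjacent_subsets_def)
  moreover have "\<forall>G\<in>nonadjacent_subsets 1 (n - 3). finite G \<and> n - 1 \<notin> G"
    using assms finite_nonadjacent_subset by (fastforce simp: nonadjacent_subsets_def)
  then have "alt_card_sum (insert (n - 1) ` nonadjacent_subsets 1 (n - 3)) = - path_alt (n - 3)"
    by (simp add: alt_card_sum_insert_image alt_card_sum_nonadjacent_subsets)
  ultimately show ?thesis
    unfolding indep_sets_cycle[OF assms]
    by (simp add: alt_card_sum_Un_disjoint finite_nonadjacent_subsets alt_card_sum_nonadjacent_subsets)
qed

lemma indep_number_cycle:
  assumes "3 \<le> n"
  shows "indep_number {0..<n} (cycle_edges n) = n div 2"
proof -
  obtain F where F: "F \<in> nonadjacent_subsets 0 (n - 1)" "card F = (n - 1 + 1) div 2"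
    by (rule nonadjacent_subset_card_eq)
  show ?thesis
  proof (rule indep_number_eqI)
    fix G assume "independent {0..<n} (cycle_edges n) G"
    then consider "G \<in> nonadjacent_subsets 0 (n - 1)"
      | H where "H \<in> nonadjacent_subsets 1 (n - 3)" "G = insert (n - 1) H"
      using indep_sets_cycle[OF assms] by blast
    then show "card G \<le> n div 2"
    proof cases
      case 1
      then show ?thesis
        using card_nonadjacent_subset_le[of G 0 "n - 1"] assms by simp
    next
      case 2
      then have "card G \<le> card H + 1"
        using finite_nonadjacent_subset by (simp add: card_insert_if)
      then show ?thesis
        using card_nonadjacent_subset_le[OF 2(1)] assms by linarith
    qed
  next
    show "independent {0..<n} (cycle_edges n) F" "card F = n div 2"
      using F indep_sets_cycle[OF assms] assms by auto
  qed simp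
qed

section \<open>Residues modulo 12\<close>

lemma periodic_eq_mod:
  fixes f :: "nat \<Rightarrow> 'a"
  assumes "\<And>n. f (n + p) = f n"
  shows "f n = f (n mod p)"
proof -
  have "f (r + m * p) = f r" for r m
  proof (induction m)
    case (Suc m)
    then show ?case
      using assms[of "r + m * p"] by (simp add: add_ac)
  qed simp
  then show ?thesis
    by (metis mod_div_mult_eq)
qed

lemma path_sign_condition_iff:
  "(-1) ^ ((n + 1) div 2) * (path_alt n - 1) = 1 \<longleftrightarrow> n mod 12 = 1 \<or> n mod 12 = 10"
proof -
  define c where "c n \<longleftrightarrow> (-1 :: int) ^ ((n + 1) div 2) * (path_alt n - 1) = 1" for n
  have "c (n + 12) = c n" for n
  proof -
    have "(n + 12 + 1) div 2 = (n + 1) div 2 + 6" "n + 12 = n + 6 + 6"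
      by simp_all
    then show ?thesis
      by (simp only: c_def path_alt_add_6 power_add) simp
  qed
  then have "c n = c (n mod 12)"
    by (rule periodic_eq_mod)
  moreover have "\<forall>r\<in>{..<12}. c r \<longleftrightarrow> r = 1 \<or> r = 10"
    by (simp add: c_def lessThan_nat_numeral)
  ultimately show ?thesis
    by (simp add: c_def)
qed

text \<open>Shifting n - 1 and n - 3 by the period 6 removes the truncated subtractions, so that the
  condition becomes 12-periodic on all of nat.\<close>
lemma cycle_sign_condition_iff:
  assumes "3 \<le> n"
  shows "(-1) ^ (n div 2) * (path_alt (n - 1) - path_alt (n - 3) - 1) = 1 \<longleftrightarrow> n mod 12 = 0"
proof -
  define c where
    "c n \<longleftrightarrow> (-1 :: int) ^ (n div 2) * (path_alt (n + 5) - path_alt (n + 3) - 1) = 1" for n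
  have residues: "\<forall>r\<in>{..<12}. c r \<longleftrightarrow> r = 0"
    by (simp add: c_def lessThan_nat_numeral)
  have "path_alt (n - 1) = path_alt (n + 5)" "path_alt (n - 3) = path_alt (n + 3)"
    using assms path_alt_add_6[of "n - 1"] path_alt_add_6[of "n - 3"] by (simp_all add: add.commute)
  then have "((-1) ^ (n div 2) * (path_alt (n - 1) - path_alt (n - 3) - 1) = 1) = c n"
    by (simp add: c_def)
  also have "c n = c (n mod 12)"
  proof (rule periodic_eq_mod)
    fix m :: nat
    have "(m + 12) div 2 = m div 2 + 6" "m + 12 + 5 = m + 5 + 6 + 6" "m + 12 + 3 = m + 3 + 6 + 6"
      by simp_all
    then show "c (m + 12) = c m"
      by (simp only: c_def path_alt_add_6 power_add) simp
  qed
  also have "c (n mod 12) \<longleftrightarrow> n mod 12 = 0"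
    using residues by simp
  finally show ?thesis .
qed

theorem theorem5p5:
  shows "(\<forall>n::nat. n \<ge> 3 \<longrightarrow>
            (pseudo_gorenstein_star (insert n {0..<n}) (cone_edges {0..<n} (cycle_edges n) n)
             \<longleftrightarrow> n mod 12 = 0))
       \<and> (\<forall>n::nat. n \<ge> 1 \<longrightarrow>
            (pseudo_gorenstein_star (insert n {0..<n}) (cone_edges {0..<n} (path_edges n) n)
             \<longleftrightarrow> n mod 12 = 1 \<or> n mod 12 = 10))"
proof (intro conjI allI impI)
  fix n :: nat
  assume n: "3 \<le> n"
  have "pseudo_gorenstein_star (insert n {0..<n}) (cone_edges {0..<n} (cycle_edges n) n)
      \<longleftrightarrow> (-1) ^ (n div 2) * (path_alt (n - 1) - path_alt (n - 3) - 1) = 1"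
    using n cycle_edges_simple[of n]
    by (simp add: pseudo_gorenstein_star_cone_iff indep_number_cycle alt_card_sum_cycle)
  then show "pseudo_gorenstein_star (insert n {0..<n}) (cone_edges {0..<n} (cycle_edges n) n)
      \<longleftrightarrow> n mod 12 = 0"
    using cycle_sign_condition_iff[OF n] by simp
next
  fix n :: nat
  assume n: "1 \<le> n"
  have "pseudo_gorenstein_star (insert n {0..<n}) (cone_edges {0..<n} (path_edges n) n)
      \<longleftrightarrow> (-1) ^ ((n + 1) div 2) * (path_alt n - 1) = 1"
    using n path_edges_simple[of n]
    by (simp add: pseudo_gorenstein_star_cone_iff indep_number_path indep_sets_path
        alt_card_sum_nonadjacent_subsets)
  then show "pseudo_gorenstein_star (insert n {0..<n}) (cone_edges {0..<n} (path_edges n) n)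
      \<longleftrightarrow> n mod 12 = 1 \<or> n mod 12 = 10"
    using path_sign_condition_iff by simp
qed

end
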